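(* Let $\mathfrak{X}$ be a connected complex analytic manifold with base point $z^*$, universal covering $\widetilde{\mathfrak{X}}$, and $\pi=\pi_1(\mathfrak{X},z^* )$. Then the spaces $\widehat{\mathcal{F}}^q_k$ of the $\hat\pi$-unipotent filtration are invariant under all monodromy operators $M_\gamma$, $\gamma\in\pi$.
   Context: $\pi$ acts on $\widetilde{\mathfrak{X}}$ by deck transformations $T_\gamma$; for a holomorphic $q$-form $\theta$ on $\widetilde{\mathfrak{X}}$, $M_\gamma\theta=T_\gamma^*\theta$ and $\mathrm{Var}_\gamma\theta=M_\gamma\theta-\theta$. $\hat\pi\subset\pi$ is the kernel of the natural epimorphism $\pi\to H_1(\mathfrak{X};\mathbb{Z}_2)$. The $\hat\pi$-unipotent filtration on the space $\mathcal{A}^q(\widetilde{\mathfrak{X}})$ of holomorphic $q$-forms on $\widetilde{\mathfrak{X}}$ is $\widehat{\mathcal{F}}^q_{-1}=\{0\}$ and $\widehat{\mathcal{F}}^q_k=\{\theta:\mathrm{Var}_\gamma\theta\in\widehat{\mathcal{F}}^q_{k-1}\text{ for all }\gamma\in\hat\pi\}$ for $k\ge0$. *)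

theory Defs
  imports "HOL-Analysis.Analysis" "HOL-Algebra.Algebra"
begin

text \<open>Subgroup of the fundamental group generated by all squares; the quotient
  by it is the mod-2 abelianization, i.e. H_1(X; Z_2) (Hurewicz).\<close>
definition sq_subgroup :: "('g, 'b) monoid_scheme \<Rightarrow> 'g set" where
  "sq_subgroup G = generate G {x \<otimes>\<^bsub>G\<^esub> x | x. x \<in> carrier G}"

definition hat_pi :: "('g, 'b) monoid_scheme \<Rightarrow> 'g set" where
  "hat_pi G = kernel G (G Mod sq_subgroup G) (\<lambda>x. sq_subgroup G #>\<^bsub>G\<^esub> x)"

text \<open>Monodromy operator M_gamma = pullback by the deck transformation T_gamma.\<close>
definition Mon :: "(('x \<Rightarrow> 'x) \<Rightarrow> 'v \<Rightarrow> 'v) \<Rightarrow> ('g \<Rightarrow> 'x \<Rightarrow> 'x) \<Rightarrow> 'g \<Rightarrow> 'v \<Rightarrow> 'v" where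
  "Mon pb T \<gamma> = pb (T \<gamma>)"

definition Var :: "(('x \<Rightarrow> 'x) \<Rightarrow> 'v \<Rightarrow> 'v) \<Rightarrow> ('g \<Rightarrow> 'x \<Rightarrow> 'x) \<Rightarrow> 'g \<Rightarrow> 'v \<Rightarrow> 'v::real_vector" where
  "Var pb T \<gamma> \<theta> = Mon pb T \<gamma> \<theta> - \<theta>"

text \<open>filt_aux n = F_{n-1}; filt_aux 0 = F_{-1} = {0}.\<close>
fun filt_aux :: "('g, 'b) monoid_scheme \<Rightarrow> ('g \<Rightarrow> 'x \<Rightarrow> 'x) \<Rightarrow> (('x \<Rightarrow> 'x) \<Rightarrow> 'v \<Rightarrow> 'v)
    \<Rightarrow> 'v::real_vector set \<Rightarrow> nat \<Rightarrow> 'v set" where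
  "filt_aux G T pb A 0 = {0}"
| "filt_aux G T pb A (Suc n) =
     {\<theta> \<in> A. \<forall>\<gamma> \<in> hat_pi G. Var pb T \<gamma> \<theta> \<in> filt_aux G T pb A n}"

definition unip_filt :: "('g, 'b) monoid_scheme \<Rightarrow> ('g \<Rightarrow> 'x \<Rightarrow> 'x) \<Rightarrow> (('x \<Rightarrow> 'x) \<Rightarrow> 'v \<Rightarrow> 'v)
    \<Rightarrow> 'v::real_vector set \<Rightarrow> nat \<Rightarrow> 'v set" where
  "unip_filt G T pb A k = filt_aux G T pb A (Suc k)"

end

theory Submission
  imports Defs
begin

text \<open>Since the squares form a normal subgroup, so does \<open>\<hat>\<pi>\<close>. The relation
  \<open>M\<^sub>\<delta> M\<^sub>\<gamma> = M\<^sub>\<gamma> M\<^sub>\<delta>\<^sub>'\<close> with \<open>\<delta>' = \<gamma>\<delta>\<gamma>\<inverse> \<in> \<hat>\<pi>\<close>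
  gives \<open>Var\<^sub>\<delta> M\<^sub>\<gamma> = M\<^sub>\<gamma> Var\<^sub>\<delta>\<^sub>'\<close>, so by induction on \<open>k\<close> each
  \<open>M\<^sub>\<gamma>\<close> maps \<open>F\<^sub>k\<close> into \<open>F\<^sub>k\<close>.\<close>

lemma (in group) conj_square:
  assumes "g \<in> carrier G" and "x \<in> carrier G"
  shows "g \<otimes> (x \<otimes> x) \<otimes> inv g = (g \<otimes> x \<otimes> inv g) \<otimes> (g \<otimes> x \<otimes> inv g)"
proof -
  have cancel: "inv g \<otimes> (g \<otimes> y) = y" if "y \<in> carrier G" for y
    using assms(1) that by (simp add: m_assoc[symmetric])
  show ?thesis
    using assms by (simp add: m_assoc cancel)
qed

lemma (in group) sq_subgroup_normal: "sq_subgroup G \<lhd> G"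
  unfolding sq_subgroup_def
proof (rule normal_generateI)
  show "{x \<otimes> x | x. x \<in> carrier G} \<subseteq> carrier G" by auto
  fix h g
  assume "h \<in> {x \<otimes> x | x. x \<in> carrier G}" and g: "g \<in> carrier G"
  then obtain x where x: "x \<in> carrier G" and h: "h = x \<otimes> x" by blast
  show "g \<otimes> h \<otimes> inv g \<in> {x \<otimes> x | x. x \<in> carrier G}"
    unfolding h conj_square[OF g x] using g x by blast
qed

lemma (in group) kernel_rcos_map:
  assumes "subgroup H G"
  shows "kernel G (G Mod H) ((#>) H) = H"
proof -
  have "kernel G (G Mod H) ((#>) H) = {x \<in> carrier G. H #> x = H}"
    by (simp add: kernel_def FactGroup_def)
  also have "\<dots> = H"
  proof
    show "{x \<in> carrier G. H #> x = H} \<subseteq> H"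
      using rcos_self[OF _ assms] by force
    show "H \<subseteq> {x \<in> carrier G. H #> x = H}"
      using coset_join2[OF _ assms] subgroup.mem_carrier[OF assms] by blast
  qed
  finally show ?thesis .
qed

lemma (in group) hat_pi_eq_sq_subgroup: "hat_pi G = sq_subgroup G"
  using kernel_rcos_map[OF normal_imp_subgroup[OF sq_subgroup_normal]]
  by (simp add: hat_pi_def)

lemma (in group) hat_pi_normal: "hat_pi G \<lhd> G"
  using sq_subgroup_normal by (simp add: hat_pi_eq_sq_subgroup)

lemma group_action_group: "group_action G E \<phi> \<Longrightarrow> group G"
  using group_action.group_hom group_hom.axioms(1) by blast

lemma Mon_mult:
  assumes "group_action G UNIV T"
    and "\<And>f g. pb (f \<circ> g) = pb g \<circ> pb f"
    and "g \<in> carrier G" and "h \<in> carrier G"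
  shows "Mon pb T (g \<otimes>\<^bsub>G\<^esub> h) = Mon pb T h \<circ> Mon pb T g"
proof -
  have "T (g \<otimes>\<^bsub>G\<^esub> h) = T g \<circ> T h"
    using group_action.composition_rule[OF assms(1) _ assms(3,4)] by auto
  then show ?thesis
    unfolding Mon_def by (simp only: assms(2))
qed

lemma Var_Mon_conj:
  fixes G (structure)
  assumes action: "group_action G UNIV T"
    and pb_comp: "\<And>f g. pb (f \<circ> g) = pb g \<circ> pb f"
    and pb_linear: "\<And>f. linear (pb f)"
    and \<gamma>: "\<gamma> \<in> carrier G" and \<delta>: "\<delta> \<in> carrier G"
  shows "Var pb T \<delta> (Mon pb T \<gamma> \<theta>)
           = Mon pb T \<gamma> (Var pb T (\<gamma> \<otimes>\<^bsub>G\<^esub> \<delta> \<otimes>\<^bsub>G\<^esub> inv\<^bsub>G\<^esub> \<gamma>) \<theta>)"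
proof -
  interpret group G
    using action by (rule group_action_group)
  let ?\<delta>' = "\<gamma> \<otimes> \<delta> \<otimes> inv \<gamma>"
  have \<delta>': "?\<delta>' \<in> carrier G" using \<gamma> \<delta> by simp
  have "?\<delta>' \<otimes> \<gamma> = \<gamma> \<otimes> \<delta>" using \<gamma> \<delta> by (simp add: m_assoc)
  have "Mon pb T \<delta> \<circ> Mon pb T \<gamma> = Mon pb T (\<gamma> \<otimes> \<delta>)"
    using Mon_mult[OF action pb_comp \<gamma> \<delta>] by simp
  also have "\<dots> = Mon pb T (?\<delta>' \<otimes> \<gamma>)"
    by (simp only: \<open>?\<delta>' \<otimes> \<gamma> = \<gamma> \<otimes> \<delta>\<close>)
  also have "\<dots> = Mon pb T \<gamma> \<circ> Mon pb T ?\<delta>'"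
    using Mon_mult[OF action pb_comp \<delta>' \<gamma>] .
  finally have "Mon pb T \<delta> \<circ> Mon pb T \<gamma> = Mon pb T \<gamma> \<circ> Mon pb T ?\<delta>'" .
  then show ?thesis
    using linear_diff[OF pb_linear] by (simp add: Var_def Mon_def fun_eq_iff)
qed

lemma filt_aux_Mon_invariant:
  fixes G (structure)
  assumes action: "group_action G UNIV T"
    and pb_comp: "\<And>f g. pb (f \<circ> g) = pb g \<circ> pb f"
    and pb_linear: "\<And>f. linear (pb f)"
    and A_invariant: "\<And>\<gamma>. \<gamma> \<in> carrier G \<Longrightarrow> pb (T \<gamma>) ` A \<subseteq> A"
    and \<gamma>: "\<gamma> \<in> carrier G"
  shows "Mon pb T \<gamma> ` filt_aux G T pb A n \<subseteq> filt_aux G T pb A n"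
proof (induction n)
  case 0
  then show ?case by (simp add: Mon_def linear_0[OF pb_linear])
next
  case (Suc n)
  interpret group G
    using action by (rule group_action_group)
  show ?case
  proof clarify
    fix \<theta> assume \<theta>: "\<theta> \<in> filt_aux G T pb A (Suc n)"
    have "Var pb T \<delta> (Mon pb T \<gamma> \<theta>) \<in> filt_aux G T pb A n" if \<delta>: "\<delta> \<in> hat_pi G" for \<delta>
    proof -
      have "\<gamma> \<otimes> \<delta> \<otimes> inv \<gamma> \<in> hat_pi G"
        using normal.inv_op_closed2[OF hat_pi_normal \<gamma> \<delta>] .
      then have "Var pb T (\<gamma> \<otimes> \<delta> \<otimes> inv \<gamma>) \<theta> \<in> filt_aux G T pb A n"
        using \<theta> by simp
      moreover have "\<delta> \<in> carrier G"
        using subgroup.mem_carrier[OF normal_imp_subgroup[OF hat_pi_normal] \<delta>] .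
      ultimately show ?thesis
        using Var_Mon_conj[OF action pb_comp pb_linear \<gamma>] Suc.IH by auto
    qed
    moreover have "Mon pb T \<gamma> \<theta> \<in> A"
      using A_invariant[OF \<gamma>] \<theta> by (auto simp: Mon_def)
    ultimately show "Mon pb T \<gamma> \<theta> \<in> filt_aux G T pb A (Suc n)" by simp
  qed
qed

theorem lemma2:
  fixes G :: "('g, 'b) monoid_scheme"
    and T :: "'g \<Rightarrow> 'x \<Rightarrow> 'x"
    and pb :: "('x \<Rightarrow> 'x) \<Rightarrow> 'v::real_vector \<Rightarrow> 'v"
    and A :: "'v set"
  assumes deck_action: "group_action G UNIV T"
    and pb_comp: "\<And>f g. pb (f \<circ> g) = pb g \<circ> pb f"
    and pb_id: "pb id = id"
    and pb_linear: "\<And>f. linear (pb f)"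
    and A_subspace: "subspace A"
    and A_invariant: "\<And>\<gamma>. \<gamma> \<in> carrier G \<Longrightarrow> pb (T \<gamma>) ` A \<subseteq> A"
  shows "\<forall>k. \<forall>\<gamma> \<in> carrier G. Mon pb T \<gamma> ` unip_filt G T pb A k \<subseteq> unip_filt G T pb A k"
  using filt_aux_Mon_invariant[OF deck_action pb_comp pb_linear A_invariant]
  unfolding unip_filt_def by blast

end
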